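(* Let $(V,c)$ be a network and $\Omega\subset V$ a finite subset of size $n$. Let $(\lambda_i,u_i)_{i=1}^n$ be a Dirichlet system for $\Omega$. Then for any $k<n$ and any function $\alpha:V\to\mathbb{R}$, $$\sum_{i=1}^k(\lambda_{k+1}-\lambda_i)^2\Big(\langle\Gamma(\alpha),u_i^2\rangle-\Lambda(\alpha,u_i)\Big)\le\sum_{i=1}^k(\lambda_{k+1}-\lambda_i)\,\big\|u_i\cdot\Delta\alpha-2\Gamma(\alpha,u_i)\big\|^2.$$
   Context: A network is a pair $(V,c)$ with $V$ countable and $c:V\times V\to[0,\infty)$ symmetric with $\pi(x):=\sum_y c(x,y)<\infty$. Set $P(x,y)=c(x,y)/\pi(x)$, $\Delta f(x)=\sum_yP(x,y)(f(x)-f(y))$, $\langle f,g\rangle=\sum_x\pi(x)f(x)\overline{g(x)}$ and $\|f\|^2=\langle f,f\rangle$. Define $2\Gamma(f,g)(x)=\sum_yP(x,y)(f(x)-f(y))\overline{(g(x)-g(y))}$, $\Gamma(f)=\Gamma(f,f)$, and $\Lambda(f,g)=\frac14\sum_{x,y}c(x,y)|f(x)-f(y)|^2|g(x)-g(y)|^2$. For finite $\Omega\subset V$ with $|\Omega|=n$, let $L^2(\Omega)$ be the functions vanishing outside $\Omega$ and $\Delta_\Omega f=\mathbf 1_\Omega\cdot\Delta f$ the Dirichlet Laplacian on $L^2(\Omega)$. A Dirichlet system for $\Omega$ is a collection $(\lambda_i,u_i)_{i=1}^n$ with $\lambda_1\le\cdots\le\lambda_n$ the eigenvalues of $\Delta_\Omega$,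 $u_i$ real-valued, vanishing outside $\Omega$, $\Delta_\Omega u_i=\lambda_iu_i$, and $\langle u_i,u_j\rangle=\mathbf 1_{i=j}$. *)

theory Defs
  imports "HOL-Analysis.Analysis"
begin

definition network :: "('v::countable \<Rightarrow> 'v \<Rightarrow> real) \<Rightarrow> bool" where
  "network c \<longleftrightarrow> (\<forall>x y. 0 \<le> c x y) \<and> (\<forall>x y. c x y = c y x) \<and> (\<forall>x. c x summable_on UNIV)"

definition pi_w :: "('v::countable \<Rightarrow> 'v \<Rightarrow> real) \<Rightarrow> 'v \<Rightarrow> real" where
  "pi_w c x = (\<Sum>\<^sub>\<infinity>y. c x y)"

definition Ptr :: "('v::countable \<Rightarrow> 'v \<Rightarrow> real) \<Rightarrow> 'v \<Rightarrow> 'v \<Rightarrow> real" where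
  "Ptr c x y = c x y / pi_w c x"

definition lap :: "('v::countable \<Rightarrow> 'v \<Rightarrow> real) \<Rightarrow> ('v \<Rightarrow> real) \<Rightarrow> 'v \<Rightarrow> real" where
  "lap c f x = (\<Sum>\<^sub>\<infinity>y. Ptr c x y * (f x - f y))"

definition inner_pi :: "('v::countable \<Rightarrow> 'v \<Rightarrow> real) \<Rightarrow> ('v \<Rightarrow> real) \<Rightarrow> ('v \<Rightarrow> real) \<Rightarrow> real" where
  "inner_pi c f g = (\<Sum>\<^sub>\<infinity>x. pi_w c x * f x * g x)"

definition norm_pi_sq :: "('v::countable \<Rightarrow> 'v \<Rightarrow> real) \<Rightarrow> ('v \<Rightarrow> real) \<Rightarrow> real" where
  "norm_pi_sq c f = inner_pi c f f"

definition Gamma2 :: "('v::countable \<Rightarrow> 'v \<Rightarrow> real) \<Rightarrow> ('v \<Rightarrow> real) \<Rightarrow> ('v \<Rightarrow> real) \<Rightarrow> 'v \<Rightarrow> real" where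
  "Gamma2 c f g x = (1/2) * (\<Sum>\<^sub>\<infinity>y. Ptr c x y * (f x - f y) * (g x - g y))"

definition Lambda :: "('v::countable \<Rightarrow> 'v \<Rightarrow> real) \<Rightarrow> ('v \<Rightarrow> real) \<Rightarrow> ('v \<Rightarrow> real) \<Rightarrow> real" where
  "Lambda c f g = (1/4) * (\<Sum>\<^sub>\<infinity>(x,y). c x y * \<bar>f x - f y\<bar>^2 * \<bar>g x - g y\<bar>^2)"

definition dir_lap :: "('v::countable \<Rightarrow> 'v \<Rightarrow> real) \<Rightarrow> 'v set \<Rightarrow> ('v \<Rightarrow> real) \<Rightarrow> 'v \<Rightarrow> real" where
  "dir_lap c \<Omega> f x = (if x \<in> \<Omega> then lap c f x else 0)"

text \<open>Dirichlet system for \<Omega> (n = card \<Omega>), indexed by 1..n: nondecreasing eigenvalues,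
  real eigenfunctions vanishing outside \<Omega>, orthonormal in the pi-weighted inner product.
  n orthonormal eigenfunctions in the n-dimensional space L^2(\<Omega>) form an eigenbasis, so
  lam 1 \<le> ... \<le> lam n are exactly the eigenvalues of the Dirichlet Laplacian with multiplicity.\<close>
definition dirichlet_system ::
  "('v::countable \<Rightarrow> 'v \<Rightarrow> real) \<Rightarrow> 'v set \<Rightarrow> (nat \<Rightarrow> real) \<Rightarrow> (nat \<Rightarrow> 'v \<Rightarrow> real) \<Rightarrow> bool" where
  "dirichlet_system c \<Omega> lam u \<longleftrightarrow>
     (\<forall>i j. 1 \<le> i \<longrightarrow> i \<le> j \<longrightarrow> j \<le> card \<Omega> \<longrightarrow> lam i \<le> lam j) \<and>
     (\<forall>i\<in>{1..card \<Omega>}. (\<forall>x. x \<notin> \<Omega> \<longrightarrow> u i x = 0) \<and>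
                        dir_lap c \<Omega> (u i) = (\<lambda>x. lam i * u i x)) \<and>
     (\<forall>i\<in>{1..card \<Omega>}. \<forall>j\<in>{1..card \<Omega>}. inner_pi c (u i) (u j) = (if i = j then 1 else 0))"

end

(*
  The eigenfunctions u_1, ..., u_n form a pi-orthonormal basis of the functions on Omega.
  Put w_i = u_i Delta(alpha) - 2 Gamma(alpha, u_i), which is the commutator Delta(alpha u_i) -
  alpha Delta(u_i), and b_ij = <alpha u_i, u_j>.  Moving Delta across the inner product gives
  <w_i, u_j>_Omega = (lambda_j - lambda_i) b_ij, and summation by parts against the symmetric
  conductances gives <Gamma(alpha), u_i^2> - Lambda(alpha, u_i) = <w_i, alpha u_i>_Omega.
  Expanding in the basis, the i-th term on the left becomes sum_j (lambda_j - lambda_i) b_ij^2,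
  while ||w_i||^2 >= ||w_i||_Omega^2 = sum_j (lambda_j - lambda_i)^2 b_ij^2.  What remains is an
  inequality for the symmetric matrix b: the terms with i, j <= k cancel in pairs, and those with
  j > k have the right sign because lambda_j >= lambda_(k+1).
*)
theory Submission
  imports Defs "Jordan_Normal_Form.Determinant"
begin

lemma network_nonneg: "network c \<Longrightarrow> 0 \<le> c x y"
  by (simp add: network_def)

lemma network_sym: "network c \<Longrightarrow> c x y = c y x"
  by (simp add: network_def)

lemma network_summable: "network c \<Longrightarrow> c x summable_on UNIV"
  by (simp add: network_def)

lemma network_le_pi_w:
  assumes "network c"
  shows "c x y \<le> pi_w c x"
  unfolding pi_w_def
  using finite_sum_le_infsum[of "c x" UNIV "{y}"] assms
  by (simp add: network_summable network_nonneg)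

lemma pi_w_nonneg: "network c \<Longrightarrow> 0 \<le> pi_w c x"
  unfolding pi_w_def by (rule infsum_nonneg) (simp add: network_nonneg)

text \<open>If \<open>pi_w c x = 0\<close> then every \<open>c x y\<close> vanishes, so the junk value \<open>Ptr c x y = 0\<close> is harmless.\<close>
lemma pi_w_mult_Ptr:
  assumes "network c"
  shows "pi_w c x * Ptr c x y = c x y"
proof (cases "pi_w c x = 0")
  case True
  then show ?thesis
    using network_le_pi_w[OF assms, of x y] network_nonneg[OF assms, of x y] by (simp add: Ptr_def)
qed (simp add: Ptr_def)

lemma pi_w_mult_lap:
  assumes "network c"
  shows "pi_w c x * lap c f x = (\<Sum>\<^sub>\<infinity>y. c x y * (f x - f y))"
  unfolding lap_def infsum_cmult_right'[symmetric]
  by (simp add: mult.assoc[symmetric] pi_w_mult_Ptr[OF assms])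

lemma pi_w_mult_Gamma2:
  assumes "network c"
  shows "pi_w c x * Gamma2 c f g x = (\<Sum>\<^sub>\<infinity>y. c x y * (f x - f y) * (g x - g y)) / 2"
proof -
  have "(\<Sum>\<^sub>\<infinity>y. pi_w c x * (Ptr c x y * (f x - f y) * (g x - g y)))
      = (\<Sum>\<^sub>\<infinity>y. c x y * (f x - f y) * (g x - g y))"
    by (simp add: mult.assoc[symmetric] pi_w_mult_Ptr[OF assms])
  then show ?thesis
    unfolding Gamma2_def infsum_cmult_right' by simp
qed

lemma has_sum_diff:
  fixes f g :: "'a \<Rightarrow> 'b::topological_ab_group_add"
  assumes "(f has_sum a) A" and "(g has_sum b) A"
  shows "((\<lambda>x. f x - g x) has_sum (a - b)) A"
proof -
  have "((\<lambda>x. - g x) has_sum - b) A"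
    by (simp add: has_sum_uminus assms(2))
  from has_sum_add[OF assms(1) this] show ?thesis
    by simp
qed

lemma summable_on_sum:
  fixes f :: "'i \<Rightarrow> 'a \<Rightarrow> real"
  assumes "finite I" and "\<And>i. i \<in> I \<Longrightarrow> f i summable_on A"
  shows "(\<lambda>x. \<Sum>i\<in>I. f i x) summable_on A"
  using assms by (induction I rule: finite_induct) (auto intro: summable_on_add)

lemma has_sum_finite_support:
  "finite A \<Longrightarrow> (\<And>x. x \<notin> A \<Longrightarrow> f x = 0) \<Longrightarrow> (f has_sum sum f A) UNIV"
  by (rule has_sum_finite_neutralI) auto

lemma summable_on_conductance_diff:
  assumes c: "network c" and energy: "(\<lambda>y. c x y * (f x - f y)^2) summable_on UNIV"
  shows "(\<lambda>y. c x y * (f x - f y)) summable_on UNIV"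
proof -
  have abs_le: "\<bar>t\<bar> \<le> 1 + t^2" for t :: real
  proof -
    have "0 \<le> (\<bar>t\<bar> - 1)^2" by simp
    then show ?thesis
      by (simp add: power2_diff power2_abs)
  qed
  have "(\<lambda>y. norm (c x y * (f x - f y))) summable_on UNIV"
  proof (rule Infinite_Sum.abs_summable_on_comparison_test')
    show "(\<lambda>y. c x y + c x y * (f x - f y)^2) summable_on UNIV"
      by (rule summable_on_add[OF network_summable[OF c] energy])
  next
    fix y
    have "norm (c x y * (f x - f y)) = c x y * \<bar>f x - f y\<bar>"
      using network_nonneg[OF c, of x y] by (simp add: abs_mult)
    also have "\<dots> \<le> c x y * (1 + (f x - f y)^2)"
      by (intro mult_left_mono abs_le network_nonneg c)
    finally show "norm (c x y * (f x - f y)) \<le> c x y + c x y * (f x - f y)^2"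
      by (simp add: distrib_left)
  qed
  then show ?thesis
    using summable_on_iff_abs_summable_on_real by blast
qed

text \<open>Pointwise this is \<open>\<Delta>(\<alpha> f) - \<alpha> \<Delta>f\<close>, the commutator of the Laplacian with multiplication
  by \<open>\<alpha>\<close>.\<close>
definition lap_commutator ::
  "('v::countable \<Rightarrow> 'v \<Rightarrow> real) \<Rightarrow> ('v \<Rightarrow> real) \<Rightarrow> ('v \<Rightarrow> real) \<Rightarrow> 'v \<Rightarrow> real" where
  "lap_commutator c \<alpha> f x = f x * lap c \<alpha> x - 2 * Gamma2 c \<alpha> f x"

definition inner_on ::
  "('v::countable \<Rightarrow> 'v \<Rightarrow> real) \<Rightarrow> 'v set \<Rightarrow> ('v \<Rightarrow> real) \<Rightarrow> ('v \<Rightarrow> real) \<Rightarrow> real" where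
  "inner_on c A f g = (\<Sum>x\<in>A. pi_w c x * f x * g x)"

lemma inner_pi_eq_inner_on:
  assumes "finite A" and "\<And>x. x \<notin> A \<Longrightarrow> f x * g x = 0"
  shows "inner_pi c f g = inner_on c A f g"
  unfolding inner_pi_def inner_on_def
  by (rule infsumI, rule has_sum_finite_neutralI) (use assms in \<open>auto simp: mult.assoc\<close>)

lemma pi_w_mult_lap_finite_support:
  assumes c: "network c" and "finite A" and f: "\<And>y. y \<notin> A \<Longrightarrow> f y = 0"
  shows "pi_w c x * lap c f x = pi_w c x * f x - (\<Sum>y\<in>A. c x y * f y)"
proof -
  have "((\<lambda>y. c x y * f x) has_sum (pi_w c x * f x)) UNIV"
    unfolding pi_w_def by (intro has_sum_cmult_left has_sum_infsum network_summable c)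
  moreover have "((\<lambda>y. c x y * f y) has_sum (\<Sum>y\<in>A. c x y * f y)) UNIV"
    by (rule has_sum_finite_support) (use assms in auto)
  ultimately have "((\<lambda>y. c x y * f x - c x y * f y)
      has_sum (pi_w c x * f x - (\<Sum>y\<in>A. c x y * f y))) UNIV"
    by (rule has_sum_diff)
  then show ?thesis
    by (simp add: pi_w_mult_lap[OF c] right_diff_distrib infsumI)
qed

lemma sum_sum_symmetric_kernel:
  fixes K :: "'a \<Rightarrow> 'a \<Rightarrow> real"
  assumes K: "\<And>x y. K x y = K y x"
  shows "(\<Sum>x\<in>A. \<Sum>y\<in>A. K x y * (a x - a y) * b x)
       = (\<Sum>x\<in>A. \<Sum>y\<in>A. K x y * (a x - a y) * (b x - b y)) / 2"
proof -
  have "(\<Sum>x\<in>A. \<Sum>y\<in>A. K x y * (a x - a y) * b y) = (\<Sum>y\<in>A. \<Sum>x\<in>A. K x y * (a x - a y) * b y)"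
    by (rule sum.swap)
  also have "\<dots> = - (\<Sum>x\<in>A. \<Sum>y\<in>A. K x y * (a x - a y) * b x)"
    unfolding sum_negf[symmetric] by (intro sum.cong refl) (simp add: K[of _ "_"] algebra_simps)
  finally have swap: "(\<Sum>x\<in>A. \<Sum>y\<in>A. K x y * (a x - a y) * b y)
      = - (\<Sum>x\<in>A. \<Sum>y\<in>A. K x y * (a x - a y) * b x)" .
  have "(\<Sum>x\<in>A. \<Sum>y\<in>A. K x y * (a x - a y) * (b x - b y))
      = (\<Sum>x\<in>A. \<Sum>y\<in>A. K x y * (a x - a y) * b x) - (\<Sum>x\<in>A. \<Sum>y\<in>A. K x y * (a x - a y) * b y)"
    by (simp add: right_diff_distrib sum_subtractf)
  then show ?thesis
    using swap by simp
qed

locale finite_carre_du_champ =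
  fixes c :: "'v::countable \<Rightarrow> 'v \<Rightarrow> real" and A :: "'v set" and \<alpha> :: "'v \<Rightarrow> real"
  assumes network: "network c" and finite: "finite A"
    and energy: "\<And>x. x \<in> A \<Longrightarrow> (\<lambda>y. c x y * (\<alpha> x - \<alpha> y)^2) summable_on UNIV"
begin

lemma pi_w_mult_lap_commutator:
  assumes f: "\<And>y. y \<notin> A \<Longrightarrow> f y = 0"
  shows "pi_w c x * lap_commutator c \<alpha> f x = (\<Sum>y\<in>A. c x y * (\<alpha> x - \<alpha> y) * f y)"
proof -
  define L where "L = (\<Sum>\<^sub>\<infinity>y. c x y * (\<alpha> x - \<alpha> y))"
  have row: "((\<lambda>y. f x * (c x y * (\<alpha> x - \<alpha> y))) has_sum (f x * L)) UNIV"
  proof (cases "x \<in> A")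
    case True
    then show ?thesis
      unfolding L_def
      by (intro has_sum_cmult_right has_sum_infsum summable_on_conductance_diff network energy)
  qed (simp add: f)
  have finite_part: "((\<lambda>y. c x y * (\<alpha> x - \<alpha> y) * f y)
      has_sum (\<Sum>y\<in>A. c x y * (\<alpha> x - \<alpha> y) * f y)) UNIV"
    by (rule has_sum_finite_support) (use finite f in auto)
  have "((\<lambda>y. c x y * (\<alpha> x - \<alpha> y) * (f x - f y))
      has_sum (f x * L - (\<Sum>y\<in>A. c x y * (\<alpha> x - \<alpha> y) * f y))) UNIV"
    by (rule has_sum_cong[THEN iffD1, OF _ has_sum_diff[OF row finite_part]])
      (simp add: algebra_simps)
  then have "pi_w c x * (2 * Gamma2 c \<alpha> f x) = f x * L - (\<Sum>y\<in>A. c x y * (\<alpha> x - \<alpha> y) * f y)"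
    using pi_w_mult_Gamma2[OF network, of x \<alpha> f] by (simp add: infsumI)
  moreover have "pi_w c x * lap c \<alpha> x = L"
    unfolding L_def by (rule pi_w_mult_lap[OF network])
  ultimately show ?thesis
    unfolding lap_commutator_def by (simp add: algebra_simps)
qed

lemma inner_on_lap_commutator_weighted:
  assumes f: "\<And>y. y \<notin> A \<Longrightarrow> f y = 0"
  shows "inner_on c A (lap_commutator c \<alpha> f) (\<lambda>x. \<alpha> x * f x)
       = (\<Sum>x\<in>A. \<Sum>y\<in>A. c x y * (\<alpha> x - \<alpha> y)^2 * f x * f y) / 2"
proof -
  have "inner_on c A (lap_commutator c \<alpha> f) (\<lambda>x. \<alpha> x * f x)
      = (\<Sum>x\<in>A. (\<Sum>y\<in>A. c x y * (\<alpha> x - \<alpha> y) * f y) * (\<alpha> x * f x))"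
    unfolding inner_on_def by (simp add: pi_w_mult_lap_commutator[OF f])
  also have "\<dots> = (\<Sum>x\<in>A. \<Sum>y\<in>A. (c x y * f x * f y) * (\<alpha> x - \<alpha> y) * \<alpha> x)"
    unfolding sum_distrib_right by (intro sum.cong refl) (simp add: algebra_simps)
  also have "\<dots> = (\<Sum>x\<in>A. \<Sum>y\<in>A. (c x y * f x * f y) * (\<alpha> x - \<alpha> y) * (\<alpha> x - \<alpha> y)) / 2"
    by (rule sum_sum_symmetric_kernel) (simp add: network_sym[OF network] mult_ac)
  finally show ?thesis
    by (simp add: power2_eq_square mult_ac)
qed

lemma Lambda_finite_support:
  assumes f: "\<And>y. y \<notin> A \<Longrightarrow> f y = 0"
  shows "Lambda c \<alpha> f = inner_pi c (Gamma2 c \<alpha> \<alpha>) (\<lambda>x. (f x)^2)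
                      - (\<Sum>x\<in>A. \<Sum>y\<in>A. c x y * (\<alpha> x - \<alpha> y)^2 * f x * f y) / 2"
proof -
  define E where "E x = (\<Sum>\<^sub>\<infinity>y. c x y * (\<alpha> x - \<alpha> y)^2)" for x
  define P where "P = (\<lambda>(x, y). c x y * (\<alpha> x - \<alpha> y)^2 * (f x)^2)"
  define Q where "Q = (\<lambda>(x, y). c x y * (\<alpha> x - \<alpha> y)^2 * f x * f y)"
  define S where "S = (\<Sum>x\<in>A. E x * (f x)^2)"
  have inner: "inner_pi c (Gamma2 c \<alpha> \<alpha>) (\<lambda>x. (f x)^2) = S / 2"
  proof -
    have "inner_pi c (Gamma2 c \<alpha> \<alpha>) (\<lambda>x. (f x)^2) = inner_on c A (Gamma2 c \<alpha> \<alpha>) (\<lambda>x. (f x)^2)"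
      by (rule inner_pi_eq_inner_on) (use finite f in auto)
    also have "\<dots> = (\<Sum>x\<in>A. E x * (f x)^2 / 2)"
      unfolding inner_on_def E_def
      by (intro sum.cong refl) (simp add: pi_w_mult_Gamma2[OF network] power2_eq_square mult.assoc)
    finally show ?thesis
      unfolding S_def by (simp add: sum_divide_distrib)
  qed
  have P_sum: "(P has_sum S) UNIV"
  proof -
    have "(P has_sum S) (\<Union>x\<in>A. {x} \<times> UNIV)"
      unfolding S_def
    proof (rule sum_has_sum[OF finite])
      fix x assume "x \<in> A"
      then have "((P \<circ> Pair x) has_sum E x * (f x)^2) UNIV"
        unfolding E_def P_def o_def by (simp add: has_sum_cmult_left energy)
      then have "(P has_sum E x * (f x)^2) (Pair x ` UNIV)"
        by (simp add: has_sum_reindex inj_on_def)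
      also have "Pair x ` UNIV = {x} \<times> UNIV"
        by auto
      finally show "(P has_sum E x * (f x)^2) ({x} \<times> UNIV)" .
    qed auto
    then show ?thesis
      by (rule has_sum_cong_neutral[THEN iffD1, rotated -1]) (auto simp: P_def f)
  qed
  have P_swap_sum: "((\<lambda>z. P (prod.swap z)) has_sum S) UNIV"
    using has_sum_swap[where f = P and A = UNIV and B = UNIV] P_sum
    by (simp add: case_prod_unfold prod.swap_def)
  have Q_sum: "(Q has_sum (\<Sum>x\<in>A. \<Sum>y\<in>A. c x y * (\<alpha> x - \<alpha> y)^2 * f x * f y)) UNIV"
    by (rule has_sum_finite_neutralI[of "A \<times> A"])
      (use finite f in \<open>auto simp: Q_def sum.cartesian_product, metis+\<close>)
  have "((\<lambda>z. P z + P (prod.swap z) - 2 * Q z)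
      has_sum (S + S - 2 * (\<Sum>x\<in>A. \<Sum>y\<in>A. c x y * (\<alpha> x - \<alpha> y)^2 * f x * f y))) UNIV"
    by (intro has_sum_diff has_sum_add has_sum_cmult_right P_sum P_swap_sum Q_sum)
  moreover have "P z + P (prod.swap z) - 2 * Q z
      = (case z of (x, y) \<Rightarrow> c x y * \<bar>\<alpha> x - \<alpha> y\<bar>^2 * \<bar>f x - f y\<bar>^2)" for z
  proof (cases z)
    case (Pair x y)
    moreover have "c y x = c x y"
      by (rule network_sym[OF network])
    ultimately show ?thesis
      by (simp add: P_def Q_def power2_eq_square algebra_simps)
  qed
  ultimately show ?thesis
    unfolding Lambda_def inner by (simp add: infsumI)
qed

lemma inner_Gamma2_minus_Lambda:
  assumes f: "\<And>y. y \<notin> A \<Longrightarrow> f y = 0"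
  shows "inner_pi c (Gamma2 c \<alpha> \<alpha>) (\<lambda>x. (f x)^2) - Lambda c \<alpha> f
       = inner_on c A (lap_commutator c \<alpha> f) (\<lambda>x. \<alpha> x * f x)"
  by (simp add: Lambda_finite_support[OF f] inner_on_lap_commutator_weighted[OF f])

lemma pi_w_mult_lap_commutator_sq_le:
  assumes f: "\<And>y. y \<notin> A \<Longrightarrow> f y = 0"
  shows "pi_w c x * (lap_commutator c \<alpha> f x)^2
       \<le> card A * (\<Sum>y\<in>A. c x y * (\<alpha> x - \<alpha> y)^2 * (f y)^2)"
proof (cases "pi_w c x = 0")
  case True
  then show ?thesis
    by (simp add: sum_nonneg network_nonneg[OF network])
next
  case False
  then have p: "0 < pi_w c x"
    using pi_w_nonneg[OF network, of x] by simp
  have "(pi_w c x * lap_commutator c \<alpha> f x)^2 = (\<Sum>y\<in>A. c x y * (\<alpha> x - \<alpha> y) * f y)^2"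
    by (simp add: pi_w_mult_lap_commutator[OF f])
  also have "\<dots> \<le> (\<Sum>y\<in>A. (c x y * (\<alpha> x - \<alpha> y) * f y)^2) * card A"
    by (rule sum_squared_le_sum_of_squares)
  also have "(\<Sum>y\<in>A. (c x y * (\<alpha> x - \<alpha> y) * f y)^2)
      \<le> (\<Sum>y\<in>A. pi_w c x * (c x y * (\<alpha> x - \<alpha> y)^2 * (f y)^2))"
  proof (rule sum_mono)
    fix y
    have "(c x y * (\<alpha> x - \<alpha> y) * f y)^2 = c x y * (c x y * (\<alpha> x - \<alpha> y)^2 * (f y)^2)"
      by (simp add: power2_eq_square algebra_simps)
    also have "\<dots> \<le> pi_w c x * (c x y * (\<alpha> x - \<alpha> y)^2 * (f y)^2)"
      by (intro mult_right_mono network_le_pi_w network) (simp add: network_nonneg[OF network])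
    finally show "(c x y * (\<alpha> x - \<alpha> y) * f y)^2 \<le> pi_w c x * (c x y * (\<alpha> x - \<alpha> y)^2 * (f y)^2)" .
  qed
  finally have "pi_w c x * (pi_w c x * (lap_commutator c \<alpha> f x)^2)
      \<le> pi_w c x * (card A * (\<Sum>y\<in>A. c x y * (\<alpha> x - \<alpha> y)^2 * (f y)^2))"
    by (simp add: sum_distrib_left power2_eq_square mult_ac mult_right_mono)
  then show ?thesis
    using p by simp
qed

text \<open>The sum over all of \<open>V\<close> could a priori diverge (and then be \<open>0\<close>); the pointwise
  bound above shows that it converges.\<close>
lemma inner_on_lap_commutator_le_norm_pi_sq:
  assumes f: "\<And>y. y \<notin> A \<Longrightarrow> f y = 0"
  shows "inner_on c A (lap_commutator c \<alpha> f) (lap_commutator c \<alpha> f)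
       \<le> norm_pi_sq c (lap_commutator c \<alpha> f)"
proof -
  define w where "w = lap_commutator c \<alpha> f"
  have nonneg: "0 \<le> pi_w c x * w x * w x" for x
    by (simp add: mult.assoc pi_w_nonneg[OF network])
  have "(\<lambda>x. card A * (\<Sum>y\<in>A. (f y)^2 * (c y x * (\<alpha> y - \<alpha> x)^2))) summable_on UNIV"
    by (intro summable_on_cmult_right summable_on_sum finite energy)
  moreover have "c y x * (\<alpha> y - \<alpha> x)^2 = c x y * (\<alpha> x - \<alpha> y)^2" for x y
    by (simp add: network_sym[OF network, of y] power2_commute)
  ultimately have "(\<lambda>x. card A * (\<Sum>y\<in>A. c x y * (\<alpha> x - \<alpha> y)^2 * (f y)^2)) summable_on UNIV"
    by (simp add: mult_ac)
  then have "(\<lambda>x. pi_w c x * w x * w x) summable_on UNIV"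
    by (rule summable_on_comparison_test)
      (use nonneg pi_w_mult_lap_commutator_sq_le[OF f]
        in \<open>auto simp: w_def power2_eq_square mult.assoc\<close>)
  then show ?thesis
    unfolding w_def[symmetric] inner_on_def norm_pi_sq_def inner_pi_def
    by (rule finite_sum_le_infsum) (use finite nonneg in auto)
qed

end

text \<open>The matrices \<open>(u\<^sub>j(x))\<close> and \<open>(p(x) u\<^sub>j(x))\<close> are left inverses of each other by
  orthonormality; being square, they are also right inverses.\<close>
lemma orthonormal_family_complete:
  fixes p :: "'a \<Rightarrow> real" and u :: "nat \<Rightarrow> 'a \<Rightarrow> real"
  assumes A: "finite A" "card A = n"
    and orth: "\<And>i j. i \<in> {1..n} \<Longrightarrow> j \<in> {1..n} \<Longrightarrow> (\<Sum>x\<in>A. p x * u i x * u j x) = (if i = j then 1 else 0)"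
    and x: "x \<in> A" and y: "y \<in> A"
  shows "(\<Sum>j=1..n. p x * u j x * u j y) = (if x = y then 1 else 0)"
proof -
  obtain e where e: "bij_betw e {0..<n} A"
    using ex_bij_betw_nat_finite[OF A(1)] A(2) by blast
  define U :: "real mat" where "U = mat n n (\<lambda>(j, a). u (Suc j) (e a))"
  define W :: "real mat" where "W = mat n n (\<lambda>(a, j). p (e a) * u (Suc j) (e a))"
  have "U * W = 1\<^sub>m n"
  proof (rule eq_matI)
    fix i j assume "i < dim_row (1\<^sub>m n :: real mat)" and "j < dim_col (1\<^sub>m n :: real mat)"
    then have i: "i < n" and j: "j < n"
      by auto
    have "(U * W) $$ (i, j) = (\<Sum>a\<in>{0..<n}. p (e a) * u (Suc i) (e a) * u (Suc j) (e a))"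
      using i j by (simp add: U_def W_def scalar_prod_def mult_ac)
    also have "\<dots> = (\<Sum>x\<in>A. p x * u (Suc i) x * u (Suc j) x)"
      by (rule sum.reindex_bij_betw[OF e])
    finally show "(U * W) $$ (i, j) = 1\<^sub>m n $$ (i, j)"
      using i j by (simp add: orth)
  qed (auto simp: U_def W_def)
  then have WU: "W * U = 1\<^sub>m n"
    by (rule mat_mult_left_right_inverse[rotated 2]) (auto simp: U_def W_def)
  obtain a b where a: "a < n" "e a = x" and b: "b < n" "e b = y"
    using e x y by (auto simp: bij_betw_def)
  have "(\<Sum>j=1..n. p x * u j x * u j y) = (\<Sum>j<n. p x * u (Suc j) x * u (Suc j) y)"
    by (simp only: One_nat_def sum.atLeast1_atMost_eq)
  also have "\<dots> = (W * U) $$ (a, b)"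
    using a b by (simp add: U_def W_def scalar_prod_def atLeast0LessThan)
  also have "\<dots> = (if x = y then 1 else 0)"
    using WU a b e by (auto simp: bij_betw_def inj_on_def)
  finally show ?thesis .
qed

lemma orthonormal_family_parseval:
  fixes p :: "'a \<Rightarrow> real" and u :: "nat \<Rightarrow> 'a \<Rightarrow> real"
  assumes A: "finite A" "card A = n"
    and orth: "\<And>i j. i \<in> {1..n} \<Longrightarrow> j \<in> {1..n} \<Longrightarrow> (\<Sum>x\<in>A. p x * u i x * u j x) = (if i = j then 1 else 0)"
  shows "(\<Sum>x\<in>A. p x * f x * g x)
       = (\<Sum>j=1..n. (\<Sum>x\<in>A. p x * f x * u j x) * (\<Sum>y\<in>A. p y * g y * u j y))"
proof -
  have "(\<Sum>j=1..n. (\<Sum>x\<in>A. p x * f x * u j x) * (\<Sum>y\<in>A. p y * g y * u j y))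
      = (\<Sum>j=1..n. \<Sum>x\<in>A. \<Sum>y\<in>A. f x * p y * g y * (p x * u j x * u j y))"
    unfolding sum_product by (intro sum.cong refl) (simp add: algebra_simps)
  also have "\<dots> = (\<Sum>x\<in>A. \<Sum>y\<in>A. \<Sum>j=1..n. f x * p y * g y * (p x * u j x * u j y))"
    by (subst sum.swap) (rule sum.cong[OF refl], rule sum.swap)
  also have "\<dots> = (\<Sum>x\<in>A. \<Sum>y\<in>A. f x * p y * g y * (\<Sum>j=1..n. p x * u j x * u j y))"
    by (simp add: sum_distrib_left)
  also have "\<dots> = (\<Sum>x\<in>A. \<Sum>y\<in>A. if x = y then f x * p y * g y else 0)"
  proof (intro sum.cong refl)
    fix x y assume "x \<in> A" and "y \<in> A"
    from orthonormal_family_complete[OF A orth this]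
    show "f x * p y * g y * (\<Sum>j=1..n. p x * u j x * u j y) = (if x = y then f x * p y * g y else 0)"
      by simp
  qed
  also have "\<dots> = (\<Sum>x\<in>A. p x * f x * g x)"
    using A(1) by (simp add: sum.delta mult_ac)
  finally show ?thesis ..
qed

locale dirichlet_basis =
  fixes c :: "'v::countable \<Rightarrow> 'v \<Rightarrow> real" and \<Omega> :: "'v set" and n :: nat
    and lam :: "nat \<Rightarrow> real" and u :: "nat \<Rightarrow> 'v \<Rightarrow> real"
  assumes network: "network c" and finite: "finite \<Omega>" and card: "card \<Omega> = n"
    and system: "dirichlet_system c \<Omega> lam u"
begin

lemma eigenvalue_mono: "1 \<le> i \<Longrightarrow> i \<le> j \<Longrightarrow> j \<le> n \<Longrightarrow> lam i \<le> lam j"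
  using system card by (simp add: dirichlet_system_def)

lemma eigenfunction_vanishes: "i \<in> {1..n} \<Longrightarrow> x \<notin> \<Omega> \<Longrightarrow> u i x = 0"
  using system card by (simp add: dirichlet_system_def)

lemma inner_on_eigenfunctions:
  assumes i: "i \<in> {1..n}" and j: "j \<in> {1..n}"
  shows "inner_on c \<Omega> (u i) (u j) = (if i = j then 1 else 0)"
proof -
  have "inner_on c \<Omega> (u i) (u j) = inner_pi c (u i) (u j)"
    by (rule inner_pi_eq_inner_on[symmetric]) (simp_all add: finite eigenfunction_vanishes[OF i])
  with i j system card show ?thesis
    by (simp add: dirichlet_system_def)
qed

lemma conductance_sum_eigenfunction:
  assumes i: "i \<in> {1..n}" and x: "x \<in> \<Omega>"
  shows "(\<Sum>y\<in>\<Omega>. c x y * u i y) = (1 - lam i) * pi_w c x * u i x"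
proof -
  have "dir_lap c \<Omega> (u i) x = lam i * u i x"
    using system card i by (simp add: dirichlet_system_def)
  with x have "lap c (u i) x = lam i * u i x"
    by (simp add: dir_lap_def)
  moreover have "pi_w c x * lap c (u i) x = pi_w c x * u i x - (\<Sum>y\<in>\<Omega>. c x y * u i y)"
    by (rule pi_w_mult_lap_finite_support[OF network finite])
      (simp add: eigenfunction_vanishes[OF i])
  ultimately show ?thesis
    by (simp add: algebra_simps)
qed

lemma inner_on_parseval:
  "inner_on c \<Omega> f g = (\<Sum>j=1..n. inner_on c \<Omega> f (u j) * inner_on c \<Omega> g (u j))"
  unfolding inner_on_def
  by (rule orthonormal_family_parseval[OF finite card])
    (use inner_on_eigenfunctions in \<open>simp add: inner_on_def\<close>)

lemma sum_sum_conductance_eigenfunction: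
  assumes i: "i \<in> {1..n}"
  shows "(\<Sum>x\<in>\<Omega>. \<Sum>y\<in>\<Omega>. g x * (c x y * u i y)) = (1 - lam i) * inner_on c \<Omega> g (u i)"
proof -
  have "(\<Sum>x\<in>\<Omega>. \<Sum>y\<in>\<Omega>. g x * (c x y * u i y)) = (\<Sum>x\<in>\<Omega>. g x * ((1 - lam i) * pi_w c x * u i x))"
    unfolding sum_distrib_left[symmetric]
  proof (intro sum.cong refl)
    fix x assume "x \<in> \<Omega>"
    then show "g x * (\<Sum>y\<in>\<Omega>. c x y * u i y) = g x * ((1 - lam i) * pi_w c x * u i x)"
      by (simp only: conductance_sum_eigenfunction[OF i])
  qed
  then show ?thesis
    unfolding inner_on_def sum_distrib_left by (simp add: algebra_simps)
qed

context
  fixes \<alpha> :: "'v \<Rightarrow> real"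
  assumes carre_du_champ: "finite_carre_du_champ c \<Omega> \<alpha>"
begin

lemma inner_on_lap_commutator_eigenfunction:
  assumes i: "i \<in> {1..n}" and j: "j \<in> {1..n}"
  shows "inner_on c \<Omega> (lap_commutator c \<alpha> (u i)) (u j)
       = (lam j - lam i) * inner_on c \<Omega> (\<lambda>x. \<alpha> x * u i x) (u j)"
proof -
  interpret finite_carre_du_champ c \<Omega> \<alpha>
    by (fact carre_du_champ)
  have swap: "(\<Sum>x\<in>\<Omega>. \<Sum>y\<in>\<Omega>. (\<alpha> y * u i y) * (c x y * u j x))
      = (\<Sum>x\<in>\<Omega>. \<Sum>y\<in>\<Omega>. (\<alpha> x * u i x) * (c x y * u j y))"
    by (subst sum.swap) (intro sum.cong refl, simp add: network_sym[OF network])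
  have "inner_on c \<Omega> (lap_commutator c \<alpha> (u i)) (u j)
      = (\<Sum>x\<in>\<Omega>. \<Sum>y\<in>\<Omega>. c x y * (\<alpha> x - \<alpha> y) * u i y * u j x)"
    unfolding inner_on_def
    by (simp add: pi_w_mult_lap_commutator eigenfunction_vanishes[OF i] sum_distrib_right)
  also have "\<dots> = (\<Sum>x\<in>\<Omega>. \<Sum>y\<in>\<Omega>. (\<alpha> x * u j x) * (c x y * u i y))
                - (\<Sum>x\<in>\<Omega>. \<Sum>y\<in>\<Omega>. (\<alpha> y * u i y) * (c x y * u j x))"
    unfolding sum_subtractf[symmetric] by (intro sum.cong refl) (simp add: algebra_simps)
  also have "\<dots> = (1 - lam i) * inner_on c \<Omega> (\<lambda>x. \<alpha> x * u j x) (u i)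
                - (1 - lam j) * inner_on c \<Omega> (\<lambda>x. \<alpha> x * u i x) (u j)"
    unfolding swap by (simp only: sum_sum_conductance_eigenfunction i j)
  also have "inner_on c \<Omega> (\<lambda>x. \<alpha> x * u j x) (u i) = inner_on c \<Omega> (\<lambda>x. \<alpha> x * u i x) (u j)"
    unfolding inner_on_def by (simp add: mult_ac)
  finally show ?thesis
    by (simp add: algebra_simps)
qed

lemma inner_Gamma2_minus_Lambda_eigenfunction:
  assumes i: "i \<in> {1..n}"
  shows "inner_pi c (Gamma2 c \<alpha> \<alpha>) (\<lambda>x. (u i x)^2) - Lambda c \<alpha> (u i)
       = (\<Sum>j=1..n. (lam j - lam i) * (inner_on c \<Omega> (\<lambda>x. \<alpha> x * u i x) (u j))^2)"
proof -
  interpret finite_carre_du_champ c \<Omega> \<alpha>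
    by (fact carre_du_champ)
  have "inner_pi c (Gamma2 c \<alpha> \<alpha>) (\<lambda>x. (u i x)^2) - Lambda c \<alpha> (u i)
      = inner_on c \<Omega> (lap_commutator c \<alpha> (u i)) (\<lambda>x. \<alpha> x * u i x)"
    by (rule inner_Gamma2_minus_Lambda) (simp add: eigenfunction_vanishes[OF i])
  also have "\<dots> = (\<Sum>j=1..n. inner_on c \<Omega> (lap_commutator c \<alpha> (u i)) (u j)
                              * inner_on c \<Omega> (\<lambda>x. \<alpha> x * u i x) (u j))"
    by (rule inner_on_parseval)
  finally show ?thesis
    using inner_on_lap_commutator_eigenfunction[OF i] by (simp add: power2_eq_square mult.assoc)
qed

lemma sum_sq_coefficients_le_norm_lap_commutator:
  assumes i: "i \<in> {1..n}"
  shows "(\<Sum>j=1..n. ((lam j - lam i) * inner_on c \<Omega> (\<lambda>x. \<alpha> x * u i x) (u j))^2)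
       \<le> norm_pi_sq c (lap_commutator c \<alpha> (u i))"
proof -
  interpret finite_carre_du_champ c \<Omega> \<alpha>
    by (fact carre_du_champ)
  have "(\<Sum>j=1..n. ((lam j - lam i) * inner_on c \<Omega> (\<lambda>x. \<alpha> x * u i x) (u j))^2)
      = inner_on c \<Omega> (lap_commutator c \<alpha> (u i)) (lap_commutator c \<alpha> (u i))"
    unfolding inner_on_parseval[of "lap_commutator c \<alpha> (u i)" "lap_commutator c \<alpha> (u i)"]
    using inner_on_lap_commutator_eigenfunction[OF i]
    by (intro sum.cong refl) (simp add: power2_eq_square)
  also have "\<dots> \<le> norm_pi_sq c (lap_commutator c \<alpha> (u i))"
    by (rule inner_on_lap_commutator_le_norm_pi_sq) (simp add: eigenfunction_vanishes[OF i])
  finally show ?thesis .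
qed

end

end

text \<open>Writing \<open>s\<^sub>i = lam (k+1) - lam i\<close> and \<open>d\<^sub>i\<^sub>j = lam j - lam i\<close>, the difference of the two
  sides is \<open>\<Sum>\<^sub>i\<^sub>\<le>\<^sub>k \<Sum>\<^sub>j s\<^sub>i d\<^sub>i\<^sub>j (s\<^sub>i - d\<^sub>i\<^sub>j) b\<^sub>i\<^sub>j\<^sup>2\<close>: the terms with \<open>j \<le> k\<close> cancel in pairs
  since \<open>s\<^sub>i - d\<^sub>i\<^sub>j = s\<^sub>j\<close> and \<open>d\<^sub>j\<^sub>i = - d\<^sub>i\<^sub>j\<close>, and those with \<open>j > k\<close> are \<open>\<le> 0\<close> since \<open>0 \<le> s\<^sub>i \<le> d\<^sub>i\<^sub>j\<close>.\<close>
lemma eigenvalue_gap_sum_le: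
  fixes lam :: "nat \<Rightarrow> real" and b :: "nat \<Rightarrow> nat \<Rightarrow> real"
  assumes kn: "k < n" and mono: "\<And>i j. 1 \<le> i \<Longrightarrow> i \<le> j \<Longrightarrow> j \<le> n \<Longrightarrow> lam i \<le> lam j"
    and sym: "\<And>i j. b i j = b j i"
  shows "(\<Sum>i=1..k. (lam (k+1) - lam i)^2 * (\<Sum>j=1..n. (lam j - lam i) * (b i j)^2))
       \<le> (\<Sum>i=1..k. (lam (k+1) - lam i) * (\<Sum>j=1..n. ((lam j - lam i) * b i j)^2))"
proof -
  define F where
    "F i j = (lam (k+1) - lam i) * (lam j - lam i) * (lam (k+1) - lam j) * (b i j)^2" for i j
  have "(\<Sum>i=1..k. \<Sum>j=1..k. F i j) = (\<Sum>j=1..k. \<Sum>i=1..k. F i j)"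
    by (rule sum.swap)
  also have "\<dots> = - (\<Sum>i=1..k. \<Sum>j=1..k. F i j)"
    unfolding sum_negf[symmetric] F_def by (intro sum.cong refl) (simp add: sym algebra_simps)
  finally have low: "(\<Sum>i=1..k. \<Sum>j=1..k. F i j) = 0"
    by simp
  have high: "(\<Sum>i=1..k. \<Sum>j=k+1..n. F i j) \<le> 0"
  proof (intro sum_nonpos)
    fix i j assume i: "i \<in> {1..k}" and j: "j \<in> {k+1..n}"
    have "0 \<le> lam (k+1) - lam i" and "lam (k+1) \<le> lam j"
      using mono[of i "k+1"] mono[of "k+1" j] i j kn by auto
    then show "F i j \<le> 0"
      unfolding F_def by (intro mult_nonpos_nonneg mult_nonneg_nonpos) auto
  qed
  have row: "(lam (k+1) - lam i)^2 * (\<Sum>j=1..n. (lam j - lam i) * (b i j)^2)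
      - (lam (k+1) - lam i) * (\<Sum>j=1..n. ((lam j - lam i) * b i j)^2)
      = (\<Sum>j=1..k. F i j) + (\<Sum>j=k+1..n. F i j)" for i
  proof -
    have "{1..n} = {1..k} \<union> {k+1..n}"
      using kn by auto
    then have "(\<Sum>j=1..n. F i j) = (\<Sum>j=1..k. F i j) + (\<Sum>j=k+1..n. F i j)"
      by (simp add: sum.union_disjoint)
    moreover have "(lam (k+1) - lam i)^2 * (\<Sum>j=1..n. (lam j - lam i) * (b i j)^2)
        - (lam (k+1) - lam i) * (\<Sum>j=1..n. ((lam j - lam i) * b i j)^2) = (\<Sum>j=1..n. F i j)"
      unfolding F_def sum_distrib_left sum_subtractf[symmetric]
      by (intro sum.cong refl) (simp add: power2_eq_square algebra_simps)
    ultimately show ?thesis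
      by simp
  qed
  have "(\<Sum>i=1..k. (lam (k+1) - lam i)^2 * (\<Sum>j=1..n. (lam j - lam i) * (b i j)^2))
      - (\<Sum>i=1..k. (lam (k+1) - lam i) * (\<Sum>j=1..n. ((lam j - lam i) * b i j)^2))
      = (\<Sum>i=1..k. \<Sum>j=1..k. F i j) + (\<Sum>i=1..k. \<Sum>j=k+1..n. F i j)"
    by (simp only: sum_subtractf[symmetric] row sum.distrib)
  then show ?thesis
    using low high by simp
qed

theorem lemma3p1:
  fixes c :: "'v::countable \<Rightarrow> 'v \<Rightarrow> real" and \<Omega> :: "'v set" and n k :: nat
    and lam :: "nat \<Rightarrow> real" and u :: "nat \<Rightarrow> 'v \<Rightarrow> real" and \<alpha> :: "'v \<Rightarrow> real"
  assumes "network c" and "finite \<Omega>" and "card \<Omega> = n"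
    and "dirichlet_system c \<Omega> lam u"
    and "k < n"
    and "\<forall>x\<in>\<Omega>. (\<lambda>y. c x y * (\<alpha> x - \<alpha> y)^2) summable_on UNIV"
  shows "(\<Sum>i=1..k. (lam (k+1) - lam i)^2 *
            (inner_pi c (Gamma2 c \<alpha> \<alpha>) (\<lambda>x. (u i x)^2) - Lambda c \<alpha> (u i)))
         \<le> (\<Sum>i=1..k. (lam (k+1) - lam i) *
            norm_pi_sq c (\<lambda>x. u i x * lap c \<alpha> x - 2 * Gamma2 c \<alpha> (u i) x))"
proof -
  interpret dirichlet_basis c \<Omega> n lam u
    using assms by unfold_locales
  have carre_du_champ: "finite_carre_du_champ c \<Omega> \<alpha>"
    using assms by unfold_locales auto
  define b where "b i j = inner_on c \<Omega> (\<lambda>x. \<alpha> x * u i x) (u j)" for i j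
  have "(\<Sum>i=1..k. (lam (k+1) - lam i)^2 *
            (inner_pi c (Gamma2 c \<alpha> \<alpha>) (\<lambda>x. (u i x)^2) - Lambda c \<alpha> (u i)))
      = (\<Sum>i=1..k. (lam (k+1) - lam i)^2 * (\<Sum>j=1..n. (lam j - lam i) * (b i j)^2))"
    using \<open>k < n\<close>
    by (intro sum.cong refl)
      (simp add: b_def inner_Gamma2_minus_Lambda_eigenfunction[OF carre_du_champ])
  also have "\<dots> \<le> (\<Sum>i=1..k. (lam (k+1) - lam i) * (\<Sum>j=1..n. ((lam j - lam i) * b i j)^2))"
    by (rule eigenvalue_gap_sum_le[OF \<open>k < n\<close> eigenvalue_mono])
      (simp_all add: b_def inner_on_def mult_ac)
  also have "\<dots> \<le> (\<Sum>i=1..k. (lam (k+1) - lam i) * norm_pi_sq c (lap_commutator c \<alpha> (u i)))"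
  proof (rule sum_mono)
    fix i assume "i \<in> {1..k}"
    then have "i \<in> {1..n}" and "0 \<le> lam (k+1) - lam i"
      using \<open>k < n\<close> eigenvalue_mono[of i "k+1"] by auto
    then show "(lam (k+1) - lam i) * (\<Sum>j=1..n. ((lam j - lam i) * b i j)^2)
        \<le> (lam (k+1) - lam i) * norm_pi_sq c (lap_commutator c \<alpha> (u i))"
      unfolding b_def
      by (intro mult_left_mono sum_sq_coefficients_le_norm_lap_commutator[OF carre_du_champ])
  qed
  finally show ?thesis
    unfolding lap_commutator_def .
qed

end
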